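(* Let $K\subset\mathbb C$ be compact, $1\le t<\infty$, $\mu$ a finite positive Borel measure compactly supported in $K$, and let $\{\Delta_{00},\Delta_{01}\}$ be a Borel partition of $\operatorname{spt}\mu$ such that $R^t(K,\mu)=L^t(\mu_{\Delta_{00}})\oplus R^t(K,\mu_{\Delta_{01}})$ and multiplication by $z$ on $R^t(K,\mu_{\Delta_{01}})$ is pure. Then $\operatorname{abpe}(R^t(K,\mu_{\Delta_{01}}))=\operatorname{abpe}(R^t(K,\mu))$.
   Context: $\mathrm{Rat}(K)$: rational functions with poles off $K$; $R^t(K,\mu)$ its closure in $L^t(\mu)$; $\mu_\Delta$ is the restriction of $\mu$ to $\Delta$. Purity means no non-trivial direct summand of the form $L^t(\mu_\Delta)$. A point $z_0\in K$ is a bounded point evaluation for $R^t(K,\mu)$ if $r\mapsto r(z_0)$ is bounded on $\mathrm{Rat}(K)$ in the $L^t(\mu)$ norm. $z_0$ is an analytic bounded point evaluation if $z_0$ is in the interior of the set of bounded point evaluations and there are $\delta,M>0$ with $|r(z)|\le M\|r\|_{L^t(\mu)}$ for all $z\in\mathbb D(z_0,\delta)$ and $r\in\mathrm{Rat}(K)$; $\operatorname{abpe}(R^t(K,\mu))$ is the set of these points. *)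

theory Defs
  imports "HOL-Analysis.Analysis" "HOL-Computational_Algebra.Polynomial"
begin

definition spt :: "complex measure \<Rightarrow> complex set" where
  "spt \<mu> = {z. \<forall>e>0. emeasure \<mu> (ball z e) \<noteq> 0}"

definition restr :: "complex measure \<Rightarrow> complex set \<Rightarrow> complex measure" where
  "restr \<mu> \<Delta> = density \<mu> (\<lambda>z. indicator \<Delta> z)"

definition Rat :: "complex set \<Rightarrow> (complex \<Rightarrow> complex) set" where
  "Rat K = {r. \<exists>p q. (\<forall>z\<in>K. poly q z \<noteq> 0) \<and> r = (\<lambda>z. poly p z / poly q z)}"

text \<open>L^t(mu) as a set of functions (membership is invariant under a.e. modification).\<close>
definition Lt :: "complex measure \<Rightarrow> real \<Rightarrow> (complex \<Rightarrow> complex) set" where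
  "Lt \<mu> t = {f. f \<in> borel_measurable \<mu> \<and> integrable \<mu> (\<lambda>z. cmod (f z) powr t)}"

definition Lt_norm :: "complex measure \<Rightarrow> real \<Rightarrow> (complex \<Rightarrow> complex) \<Rightarrow> real" where
  "Lt_norm \<mu> t f = (enn2real (\<integral>\<^sup>+ z. ennreal (cmod (f z) powr t) \<partial>\<mu>)) powr (1 / t)"

definition Rt :: "complex set \<Rightarrow> complex measure \<Rightarrow> real \<Rightarrow> (complex \<Rightarrow> complex) set" where
  "Rt K \<mu> t = {f \<in> Lt \<mu> t. \<forall>\<epsilon>>0. \<exists>r\<in>Rat K. Lt_norm \<mu> t (\<lambda>z. f z - r z) < \<epsilon>}"

text \<open>Purity: R^t(K,mu) has no non-trivial direct summand of the form L^t(mu_Delta),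
  i.e. there is no Borel Delta with mu(Delta) > 0 such that L^t(mu_Delta)
  (embedded in L^t(mu) as functions vanishing off Delta) is contained in R^t(K,mu).\<close>
definition pure :: "complex set \<Rightarrow> complex measure \<Rightarrow> real \<Rightarrow> bool" where
  "pure K \<mu> t \<longleftrightarrow> \<not> (\<exists>\<Delta> \<in> sets borel. emeasure \<mu> \<Delta> > 0 \<and>
      (\<forall>f \<in> Lt (restr \<mu> \<Delta>) t. (\<lambda>z. indicator \<Delta> z * f z) \<in> Rt K \<mu> t))"

definition bpe :: "complex set \<Rightarrow> complex measure \<Rightarrow> real \<Rightarrow> complex \<Rightarrow> bool" where
  "bpe K \<mu> t z0 \<longleftrightarrow> z0 \<in> K \<and> (\<exists>M. \<forall>r\<in>Rat K. cmod (r z0) \<le> M * Lt_norm \<mu> t r)"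

definition abpe :: "complex set \<Rightarrow> complex measure \<Rightarrow> real \<Rightarrow> complex set" where
  "abpe K \<mu> t = {z0. z0 \<in> interior {z. bpe K \<mu> t z} \<and>
      (\<exists>\<delta>>0. \<exists>M>0. \<forall>z\<in>ball z0 \<delta>. \<forall>r\<in>Rat K. cmod (r z) \<le> M * Lt_norm \<mu> t r)}"

end

theory Submission
  imports Defs
begin

text \<open>
  The inclusion of abpe(mu_Delta01) in abpe(mu) holds because the L^t(mu_Delta01) norm of a
  rational function is dominated by its L^t(mu) norm.

  Conversely, let |u(z)| <= M ||u||_mu for all rational u and all z near z0, and let z be no atom
  of mu. The splitting of R^t(K,mu) puts every bounded Borel function vanishing on Delta01 into
  R^t(K,mu), in particular f = 1_A r / (w - z), where A is the complement of Delta01 united with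
  the ball B(z,eps). For a rational q close to f in L^t(mu), the rational function
  u = r - (w - z) q satisfies u(z) = r(z) and is close to r restricted to Delta01 united with
  B(z,eps). Since mu(B(z,eps)) tends to 0, this yields |r(z)| <= 2 M ||r||_{L^t(mu_Delta01)}; the
  factor 2 comes from (a + b)^t <= 2^t (a^t + b^t), used in place of Minkowski's inequality. As
  mu has only countably many atoms and r is continuous, the bound extends to all z near z0.
\<close>

lemma Rat_measurable:
  assumes "r \<in> Rat K" shows "r \<in> borel_measurable borel"
proof -
  have poly_measurable: "poly p \<in> borel_measurable borel" for p :: "complex poly"
    by (intro borel_measurable_continuous_onI continuous_intros)
  show ?thesis
    using assms by (auto simp: Rat_def intro!: borel_measurable_divide poly_measurable)
qed

lemma continuous_on_Rat: "r \<in> Rat K \<Longrightarrow> continuous_on K r"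
  unfolding Rat_def by (auto intro!: continuous_intros)

lemma Rat_bounded:
  assumes "compact K" "r \<in> Rat K"
  shows "\<exists>C>0. \<forall>z\<in>K. cmod (r z) \<le> C"
proof -
  have "bounded (r ` K)"
    using assms by (intro compact_imp_bounded compact_continuous_image continuous_on_Rat)
  then obtain C where "\<forall>z\<in>K. cmod (r z) \<le> C"
    unfolding bounded_iff by blast
  then show ?thesis
    by (intro exI[of _ "max C 1"]) fastforce
qed

lemma Rat_const: "(\<lambda>z. c) \<in> Rat K"
  unfolding Rat_def by (intro CollectI exI[of _ "[:c:]"] exI[of _ 1]) auto

lemma Rat_mult_linear: "r \<in> Rat K \<Longrightarrow> (\<lambda>w. (w - z) * r w) \<in> Rat K"
  unfolding Rat_def by clarify (rule exI[of _ "[:-z, 1:] * _"], auto simp: algebra_simps)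

text \<open>Off K a denominator may vanish, and division by zero yields 0 there, so the difference
  of two rational functions is only represented on K.\<close>

lemma Rat_diff_on:
  assumes "r \<in> Rat K" "s \<in> Rat K"
  obtains u where "u \<in> Rat K" "\<And>w. w \<in> K \<Longrightarrow> u w = r w - s w"
proof -
  obtain p q where pq: "\<forall>z\<in>K. poly q z \<noteq> 0" "r = (\<lambda>z. poly p z / poly q z)"
    using assms(1) unfolding Rat_def by blast
  obtain p' q' where pq': "\<forall>z\<in>K. poly q' z \<noteq> 0" "s = (\<lambda>z. poly p' z / poly q' z)"
    using assms(2) unfolding Rat_def by blast
  show ?thesis
  proof
    show "(\<lambda>z. poly (p * q' - p' * q) z / poly (q * q') z) \<in> Rat K"
      unfolding Rat_def using pq(1) pq'(1)
      by (intro CollectI exI[of _ "p * q' - p' * q"] exI[of _ "q * q'"]) auto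
    show "poly (p * q' - p' * q) w / poly (q * q') w = r w - s w" if "w \<in> K" for w
      using pq pq' that by (auto simp: field_simps)
  qed
qed

lemma AE_in_spt:
  assumes "sets \<mu> = sets borel"
  shows "AE z in \<mu>. z \<in> spt \<mu>"
proof -
  define \<F> where "\<F> = {ball z e | z e. emeasure \<mu> (ball z e) = 0}"
  obtain \<F>' where \<F>': "\<F>' \<subseteq> \<F>" "countable \<F>'" "\<Union>\<F>' = \<Union>\<F>"
    using Lindelof[of \<F>] unfolding \<F>_def by auto
  have "(\<Union>B\<in>\<F>'. B) \<in> null_sets \<mu>"
    using \<F>' assms by (intro null_sets_UN') (auto simp: \<F>_def null_sets_def)
  moreover have "{z \<in> space \<mu>. z \<notin> spt \<mu>} \<subseteq> \<Union>\<F>'"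
    unfolding \<F>'(3) \<F>_def spt_def by force
  ultimately show ?thesis
    by (auto intro: AE_I')
qed

lemma measure_ball_small:
  fixes M :: "'a::metric_space measure"
  assumes "finite_measure M" "sets M = sets borel" "measure M {z} = 0" "\<theta> > 0"
  obtains \<epsilon> where "\<epsilon> > 0" "measure M (ball z \<epsilon>) < \<theta>"
proof -
  let ?B = "\<lambda>n::nat. ball z (inverse (Suc n))"
  have "x = z" if "\<forall>n. dist z x < inverse (Suc n)" for x
  proof (rule ccontr)
    assume "x \<noteq> z"
    then obtain n where "inverse (Suc n) < dist z x"
      by (metis reals_Archimedean zero_less_dist_iff)
    moreover have "dist z x < inverse (Suc n)"
      using that by blast
    ultimately show False
      by linarith
  qed
  then have Inter_B: "(\<Inter>n. ?B n) = {z}"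
    by auto
  have "range ?B \<subseteq> sets M"
    unfolding assms(2) by (intro image_subsetI) simp
  moreover have "decseq ?B"
    by (intro decseq_SucI subset_ball) (simp add: field_simps)
  ultimately have "(\<lambda>n. measure M (?B n)) \<longlonglongrightarrow> measure M (\<Inter>n. ?B n)"
    by (rule finite_measure.finite_Lim_measure_decseq[OF assms(1)])
  then have "(\<lambda>n. measure M (?B n)) \<longlonglongrightarrow> 0"
    unfolding Inter_B assms(3) .
  then have "eventually (\<lambda>n. measure M (?B n) < \<theta>) sequentially"
    using assms(4) by (rule order_tendstoD(2))
  then obtain n where "measure M (?B n) < \<theta>"
    unfolding eventually_sequentially by blast
  then show ?thesis
    by (intro that[of "inverse (Suc n)"]) auto
qed

lemma Lt_norm_nonneg: "Lt_norm \<nu> t f \<ge> 0"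
  unfolding Lt_norm_def by simp

text \<open>No integrability is assumed: otherwise both sides are 0, since enn2real maps infinity to 0
  and the Bochner integral of a non-integrable function is 0.\<close>

lemma Lt_norm_eq_integral:
  assumes "f \<in> borel_measurable \<nu>"
  shows "Lt_norm \<nu> t f = (\<integral>z. cmod (f z) powr t \<partial>\<nu>) powr (1 / t)"
  unfolding Lt_norm_def using assms by (subst enn2real_nn_integral_eq_integral) auto

lemma restr_eq_density: "restr \<mu> \<Delta> = density \<mu> (\<lambda>z. ennreal (indicator \<Delta> z))"
  unfolding restr_def by (simp add: ennreal_indicator)

lemma integrable_indicator_mult_powr:
  assumes "\<Delta> \<in> sets \<mu>" "f \<in> Lt \<mu> t"
  shows "integrable \<mu> (\<lambda>z. indicator \<Delta> z * cmod (f z) powr t)"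
  using integrable_mult_indicator[OF assms(1), of "\<lambda>z. cmod (f z) powr t"] assms(2)
  unfolding Lt_def by simp

lemma Lt_restr:
  assumes "\<Delta> \<in> sets \<mu>" "f \<in> Lt \<mu> t"
  shows "f \<in> Lt (restr \<mu> \<Delta>) t"
proof -
  have "integrable \<mu> (\<lambda>z. cmod (f z) powr t)"
    using assms(2) unfolding Lt_def by simp
  then have "integrable (restr \<mu> \<Delta>) (\<lambda>z. cmod (f z) powr t)"
    using integrable_indicator_mult_powr[OF assms] assms(1) unfolding restr_eq_density
    by (subst integrable_density) (auto dest: borel_measurable_integrable)
  then show ?thesis
    using assms(2) unfolding Lt_def restr_def by simp
qed

lemma Lt_norm_restr:
  assumes "\<Delta> \<in> sets \<mu>" "f \<in> borel_measurable \<mu>"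
  shows "Lt_norm (restr \<mu> \<Delta>) t f = (\<integral>z. indicator \<Delta> z * cmod (f z) powr t \<partial>\<mu>) powr (1 / t)"
  using assms unfolding restr_eq_density
  by (simp add: Lt_norm_eq_integral integral_density)

lemma Lt_norm_restr_le:
  assumes "\<Delta> \<in> sets \<mu>" "f \<in> Lt \<mu> t" "t > 0"
  shows "Lt_norm (restr \<mu> \<Delta>) t f \<le> Lt_norm \<mu> t f"
proof -
  have "(\<integral>z. indicator \<Delta> z * cmod (f z) powr t \<partial>\<mu>) \<le> (\<integral>z. cmod (f z) powr t \<partial>\<mu>)"
    using integrable_indicator_mult_powr[OF assms(1,2)] assms(2) unfolding Lt_def
    by (intro integral_mono) (auto simp: indicator_def)
  then show ?thesis
    using assms unfolding Lt_def
    by (simp add: Lt_norm_restr Lt_norm_eq_integral powr_mono2)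
qed

lemma Lt_norm_restr_vanishing:
  assumes "\<Delta> \<in> sets \<mu>" "f \<in> borel_measurable \<mu>" "\<And>z. z \<in> \<Delta> \<Longrightarrow> f z = 0"
  shows "Lt_norm (restr \<mu> \<Delta>) t f = 0"
proof -
  have "(\<lambda>z. indicator \<Delta> z * cmod (f z) powr t) = (\<lambda>z. 0)"
    using assms(3) by (auto simp: indicator_def)
  then show ?thesis
    using assms(1,2) by (simp add: Lt_norm_restr)
qed

lemma Lt_if_AE_bounded:
  assumes "finite_measure \<mu>" "f \<in> borel_measurable \<mu>" "AE z in \<mu>. cmod (f z) \<le> C" "t \<ge> 0"
  shows "f \<in> Lt \<mu> t"
proof -
  interpret finite_measure \<mu> by fact
  have "AE z in \<mu>. norm (cmod (f z) powr t) \<le> C powr t"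
    using assms(3) by eventually_elim (use assms(4) in \<open>auto intro: powr_mono2\<close>)
  then have "integrable \<mu> (\<lambda>z. cmod (f z) powr t)"
    using assms(2) by (intro integrable_const_bound) auto
  then show ?thesis
    using assms(2) unfolding Lt_def by auto
qed

lemma Rat_in_Lt:
  assumes "compact K" "r \<in> Rat K" and \<mu>: "finite_measure \<mu>" "sets \<mu> = sets borel" "AE z in \<mu>. z \<in> K"
    and "t \<ge> 0"
  shows "r \<in> Lt \<mu> t"
proof -
  obtain C where C: "\<forall>z\<in>K. cmod (r z) \<le> C"
    using Rat_bounded[OF assms(1,2)] by blast
  have "AE z in \<mu>. cmod (r z) \<le> C"
    using \<mu>(3) by eventually_elim (use C in auto)
  moreover have "r \<in> borel_measurable \<mu>"
    using Rat_measurable[OF assms(2)] by (simp add: measurable_cong_sets[OF \<mu>(2) refl])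
  ultimately show ?thesis
    using Lt_if_AE_bounded \<mu>(1) assms(6) by blast
qed

lemma norm_add_powr_le:
  fixes x y :: "'a::real_normed_vector"
  assumes "t \<ge> 0"
  shows "norm (x + y) powr t \<le> 2 powr t * (norm x powr t + norm y powr t)"
proof -
  let ?m = "max (norm x) (norm y)"
  have "norm (x + y) powr t \<le> (2 * ?m) powr t"
    using norm_triangle_ineq[of x y] assms by (intro powr_mono2) auto
  also have "\<dots> = 2 powr t * ?m powr t"
    by (simp add: powr_mult)
  also have "?m powr t \<le> norm x powr t + norm y powr t"
    by (simp add: max_def)
  finally show ?thesis
    by simp
qed

lemma Lt_diff:
  assumes "f \<in> Lt \<mu> t" "g \<in> Lt \<mu> t" "t \<ge> 0"
  shows "(\<lambda>w. f w - g w) \<in> Lt \<mu> t"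
proof -
  have [measurable]: "f \<in> borel_measurable \<mu>" "g \<in> borel_measurable \<mu>"
    using assms(1,2) unfolding Lt_def by auto
  have "integrable \<mu> (\<lambda>w. 2 powr t * (cmod (f w) powr t + cmod (g w) powr t))"
    using assms(1,2) unfolding Lt_def by auto
  then have "integrable \<mu> (\<lambda>w. cmod (f w - g w) powr t)"
  proof (rule Bochner_Integration.integrable_bound)
    show "AE w in \<mu>. norm (cmod (f w - g w) powr t)
        \<le> norm (2 powr t * (cmod (f w) powr t + cmod (g w) powr t))"
      using norm_add_powr_le[OF assms(3), of "f _" "- g _"] by simp
  qed measurable
  then show ?thesis
    unfolding Lt_def by auto
qed

lemma norm_indicator_mult_powr: "cmod (indicator S w * x) powr t = indicator S w * cmod x powr t"
  by (simp add: indicator_def)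

lemma Lt_indicator_mult:
  assumes "S \<in> sets \<mu>" "f \<in> Lt \<mu> t"
  shows "(\<lambda>w. indicator S w * f w) \<in> Lt \<mu> t"
proof -
  have [measurable]: "f \<in> borel_measurable \<mu>" "S \<in> sets \<mu>"
    using assms unfolding Lt_def by auto
  show ?thesis
    using integrable_indicator_mult_powr[OF assms]
    unfolding Lt_def by (simp add: norm_indicator_mult_powr)
qed

lemma Lt_indicator_div_off_ball:
  assumes "finite_measure \<mu>" "sets \<mu> = sets borel" "r \<in> borel_measurable borel"
    and "AE w in \<mu>. cmod (r w) \<le> C" "C \<ge> 0" "S \<in> sets borel" "S \<inter> ball z \<epsilon> = {}" "\<epsilon> > 0" "t \<ge> 0"
  shows "(\<lambda>w. indicator S w * r w / (w - z)) \<in> Lt \<mu> t"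
proof (rule Lt_if_AE_bounded[OF assms(1)])
  show "(\<lambda>w. indicator S w * r w / (w - z)) \<in> borel_measurable \<mu>"
    using assms(3,6) by (simp add: measurable_cong_sets[OF assms(2) refl])
  have bound: "cmod (indicator S w * r w / (w - z)) \<le> C / \<epsilon>" if "cmod (r w) \<le> C" for w
  proof (cases "w \<in> S")
    case True
    then have "\<epsilon> \<le> cmod (w - z)"
      using assms(7) by (auto simp: dist_norm norm_minus_commute)
    then show ?thesis
      using True that assms(5,8) by (auto simp: norm_divide intro!: frac_le)
  qed (use assms(5,8) in simp)
  show "AE w in \<mu>. cmod (indicator S w * r w / (w - z)) \<le> C / \<epsilon>"
    using assms(4) by eventually_elim (rule bound)
qed fact

lemma Rt_if_Lt_norm_eq_0:
  assumes "f \<in> Lt \<nu> t" "Lt_norm \<nu> t f = 0"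
  shows "f \<in> Rt K \<nu> t"
  using assms unfolding Rt_def by (auto intro!: bexI[OF _ Rat_const[of 0]])

lemma Rt_approx_integral:
  assumes "f \<in> Rt K \<mu> t" "sets \<mu> = sets borel" "t > 0" "\<eta> > 0"
  obtains q where "q \<in> Rat K" "(\<integral>w. cmod (f w - q w) powr t \<partial>\<mu>) < \<eta>"
proof -
  have "\<eta> powr (1 / t) > 0"
    using assms(4) by simp
  then obtain q where q: "q \<in> Rat K" "Lt_norm \<mu> t (\<lambda>w. f w - q w) < \<eta> powr (1 / t)"
    using assms(1) unfolding Rt_def by blast
  have "(\<lambda>w. f w - q w) \<in> borel_measurable \<mu>"
    using assms(1) Rat_measurable[OF q(1)] unfolding Rt_def Lt_def
    by (auto simp: measurable_cong_sets[OF assms(2) refl])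
  then have "(\<integral>w. cmod (f w - q w) powr t \<partial>\<mu>) powr (1 / t) < \<eta> powr (1 / t)"
    using q(2) by (simp add: Lt_norm_eq_integral)
  then have "(\<integral>w. cmod (f w - q w) powr t \<partial>\<mu>) < \<eta>"
    using assms(3,4) by (meson less_eq_real_def not_le powr_mono2 zero_le_divide_1_iff)
  with q(1) show ?thesis
    by (rule that)
qed

lemma integral_powr_add_mult_le:
  assumes "t \<ge> 0" "h \<in> Lt \<mu> t" "g \<in> Lt \<mu> t" "u \<in> Lt \<mu> t"
    and "AE w in \<mu>. u w = h w + m w * g w" "AE w in \<mu>. cmod (m w) \<le> D"
  shows "(\<integral>w. cmod (u w) powr t \<partial>\<mu>)
    \<le> 2 powr t * ((\<integral>w. cmod (h w) powr t \<partial>\<mu>) + D powr t * (\<integral>w. cmod (g w) powr t \<partial>\<mu>))"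
proof -
  have "AE w in \<mu>. cmod (u w) powr t \<le> 2 powr t * (cmod (h w) powr t + D powr t * cmod (g w) powr t)"
    using assms(5,6)
  proof eventually_elim
    case (elim w)
    have "cmod (m w * g w) powr t \<le> D powr t * cmod (g w) powr t"
      using elim(2) assms(1) by (simp add: norm_mult powr_mult mult_right_mono powr_mono2)
    have "cmod (u w) powr t \<le> 2 powr t * (cmod (h w) powr t + cmod (m w * g w) powr t)"
      using norm_add_powr_le[OF assms(1), of "h w" "m w * g w"] elim(1) by simp
    also have "\<dots> \<le> 2 powr t * (cmod (h w) powr t + D powr t * cmod (g w) powr t)"
      using \<open>cmod (m w * g w) powr t \<le> _\<close> by (intro mult_left_mono) auto
    finally show ?case .
  qed
  then have "(\<integral>w. cmod (u w) powr t \<partial>\<mu>)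
      \<le> (\<integral>w. 2 powr t * (cmod (h w) powr t + D powr t * cmod (g w) powr t) \<partial>\<mu>)"
    using assms(2-4) unfolding Lt_def by (intro integral_mono_AE) auto
  also have "\<dots> = 2 powr t * ((\<integral>w. cmod (h w) powr t \<partial>\<mu>) + D powr t * (\<integral>w. cmod (g w) powr t \<partial>\<mu>))"
    using assms(2,3) unfolding Lt_def by simp
  finally show ?thesis .
qed

lemma integral_indicator_union_powr_le:
  assumes "finite_measure \<mu>" "E \<in> sets \<mu>" "B \<in> sets \<mu>" "r \<in> Lt \<mu> t" "AE w in \<mu>. cmod (r w) \<le> C" "t \<ge> 0"
  shows "(\<integral>w. indicator (E \<union> B) w * cmod (r w) powr t \<partial>\<mu>)
    \<le> (\<integral>w. indicator E w * cmod (r w) powr t \<partial>\<mu>) + C powr t * measure \<mu> B"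
proof -
  have "AE w in \<mu>. indicator (E \<union> B) w * cmod (r w) powr t
      \<le> indicator E w * cmod (r w) powr t + C powr t * indicator B w"
    using assms(5) by eventually_elim (use assms(6) in \<open>auto simp: indicator_def intro: powr_mono2\<close>)
  moreover have int_E: "integrable \<mu> (\<lambda>w. indicator E w * cmod (r w) powr t)"
    and "integrable \<mu> (\<lambda>w. indicator (E \<union> B) w * cmod (r w) powr t)"
    using assms(2-4) by (auto intro: integrable_indicator_mult_powr)
  moreover have int_B: "integrable \<mu> (\<lambda>w. C powr t * indicator B w)"
    using assms(1,3) finite_measure.emeasure_finite
    by (intro integrable_mult_right integrable_real_indicator) (auto simp: less_top[symmetric])
  ultimately have "(\<integral>w. indicator (E \<union> B) w * cmod (r w) powr t \<partial>\<mu>)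
      \<le> (\<integral>w. indicator E w * cmod (r w) powr t + C powr t * indicator B w \<partial>\<mu>)"
    by (intro integral_mono_AE) auto
  also have "\<dots> = (\<integral>w. indicator E w * cmod (r w) powr t \<partial>\<mu>) + C powr t * measure \<mu> B"
    using int_E int_B assms(3) by (simp add: sets.Int_space_eq2)
  finally show ?thesis .
qed

lemma integral_powr_localized_le:
  assumes "finite_measure \<mu>" "t \<ge> 0" "E \<in> sets \<mu>" "B \<in> sets \<mu>"
    and "r \<in> Lt \<mu> t" "AE w in \<mu>. cmod (r w) \<le> C" "g \<in> Lt \<mu> t" "u \<in> Lt \<mu> t"
    and "AE w in \<mu>. u w = indicator (E \<union> B) w * r w + m w * g w" "AE w in \<mu>. cmod (m w) \<le> D"
  shows "(\<integral>w. cmod (u w) powr t \<partial>\<mu>) \<le> 2 powr t * ((\<integral>w. indicator E w * cmod (r w) powr t \<partial>\<mu>)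
    + C powr t * measure \<mu> B + D powr t * (\<integral>w. cmod (g w) powr t \<partial>\<mu>))"
proof -
  have "(\<integral>w. cmod (u w) powr t \<partial>\<mu>) \<le> 2 powr t * ((\<integral>w. cmod (indicator (E \<union> B) w * r w) powr t \<partial>\<mu>)
      + D powr t * (\<integral>w. cmod (g w) powr t \<partial>\<mu>))"
    using assms(3,4)
    by (intro integral_powr_add_mult_le[where m = m] Lt_indicator_mult assms(2,5,7-10)) auto
  also have "(\<integral>w. cmod (indicator (E \<union> B) w * r w) powr t \<partial>\<mu>)
      \<le> (\<integral>w. indicator E w * cmod (r w) powr t \<partial>\<mu>) + C powr t * measure \<mu> B"
    unfolding norm_indicator_mult_powr by (rule integral_indicator_union_powr_le[OF assms(1,3-6,2)])
  finally show ?thesis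
    by (simp add: algebra_simps)
qed

lemma indicator_split_div_diff:
  fixes x y :: "'a::field"
  assumes "z \<in> A"
  shows "indicator A w * x + (w - z) * (indicator (- A) w * x / (w - z) - y) = x - (w - z) * y"
proof (cases "w \<in> A")
  case False
  with assms have "w - z \<noteq> 0"
    by auto
  with False show ?thesis
    by (simp add: field_simps)
qed simp

lemma Rat_localize:
  assumes "compact K" "t > 0"
    and \<mu>: "finite_measure \<mu>" "sets \<mu> = sets borel" "AE w in \<mu>. w \<in> K"
    and E: "E \<in> sets borel"
    and vanishing: "\<And>f. f \<in> Lt \<mu> t \<Longrightarrow> \<forall>w\<in>E. f w = 0 \<Longrightarrow> f \<in> Rt K \<mu> t"
    and z: "z \<in> K" "measure \<mu> {z} = 0" and r: "r \<in> Rat K" and "\<theta> > 0"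
  obtains u where "u \<in> Rat K" "u z = r z"
    "(\<integral>w. cmod (u w) powr t \<partial>\<mu>) \<le> 2 powr t * ((\<integral>w. indicator E w * cmod (r w) powr t \<partial>\<mu>) + \<theta>)"
proof -
  have E_sets: "E \<in> sets \<mu>"
    using E \<mu>(2) by simp
  have AE_bound: "AE w in \<mu>. cmod (g w) \<le> M" if "\<forall>w\<in>K. cmod (g w) \<le> M" for g M
    using \<mu>(3) by eventually_elim (use that in auto)
  have Lt_Rat: "s \<in> Lt \<mu> t" if "s \<in> Rat K" for s
    using Rat_in_Lt[OF assms(1) that \<mu>] assms(2) by simp
  obtain C where C: "C > 0" "\<forall>w\<in>K. cmod (r w) \<le> C"
    using Rat_bounded[OF assms(1) r] by blast
  obtain D where D: "D > 0" "\<forall>w\<in>K. cmod (w - z) \<le> D"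
    using Rat_bounded[OF assms(1) Rat_mult_linear[OF Rat_const[of 1]]] by auto
  obtain \<epsilon> where \<epsilon>: "\<epsilon> > 0" "measure \<mu> (ball z \<epsilon>) < \<theta> / (2 * C powr t)"
    using measure_ball_small[OF \<mu>(1,2) z(2), of "\<theta> / (2 * C powr t)"] \<open>\<theta> > 0\<close> C(1) by auto
  define B where "B = ball z \<epsilon>"
  define f where "f w = indicator (- (E \<union> B)) w * r w / (w - z)" for w
  have "f \<in> Lt \<mu> t"
    unfolding f_def using Rat_measurable[OF r] E C \<epsilon>(1) assms(2)
    by (intro Lt_indicator_div_off_ball[OF \<mu>(1,2), where C = C and \<epsilon> = \<epsilon>] AE_bound)
      (auto simp: B_def)
  moreover have "\<forall>w\<in>E. f w = 0"
    by (simp add: f_def)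
  ultimately have "f \<in> Rt K \<mu> t"
    by (rule vanishing)
  then obtain q where q: "q \<in> Rat K" "(\<integral>w. cmod (f w - q w) powr t \<partial>\<mu>) < \<theta> / (2 * D powr t)"
    using Rt_approx_integral[OF _ \<mu>(2) assms(2), of f K "\<theta> / (2 * D powr t)"] \<open>\<theta> > 0\<close> D(1) by auto
  obtain u where u: "u \<in> Rat K" "\<And>w. w \<in> K \<Longrightarrow> u w = r w - (w - z) * q w"
    using Rat_diff_on[OF r Rat_mult_linear[OF q(1)]] by blast
  have split: "indicator (E \<union> B) w * r w + (w - z) * (f w - q w) = r w - (w - z) * q w" for w
    unfolding f_def by (rule indicator_split_div_diff) (use \<epsilon>(1) in \<open>simp add: B_def\<close>)
  have "AE w in \<mu>. u w = indicator (E \<union> B) w * r w + (w - z) * (f w - q w)"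
    using \<mu>(3) by eventually_elim (simp add: u(2) split)
  moreover have "(\<lambda>w. f w - q w) \<in> Lt \<mu> t"
    using Lt_diff[OF \<open>f \<in> Lt \<mu> t\<close> Lt_Rat[OF q(1)]] assms(2) by simp
  moreover have "AE w in \<mu>. cmod (w - z) \<le> D"
    using AE_bound[of "\<lambda>w. w - z"] D(2) by simp
  ultimately have "(\<integral>w. cmod (u w) powr t \<partial>\<mu>) \<le> 2 powr t * ((\<integral>w. indicator E w * cmod (r w) powr t \<partial>\<mu>)
      + C powr t * measure \<mu> B + D powr t * (\<integral>w. cmod (f w - q w) powr t \<partial>\<mu>))"
    using E_sets \<mu>(2) assms(2) Lt_Rat[OF r] AE_bound[OF C(2)] Lt_Rat[OF u(1)]
    by (intro integral_powr_localized_le[OF \<mu>(1)]) (auto simp: B_def)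
  also have "C powr t * measure \<mu> B < \<theta> / 2"
    using \<epsilon>(2) C(1) by (simp add: B_def field_simps)
  also have "D powr t * (\<integral>w. cmod (f w - q w) powr t \<partial>\<mu>) < \<theta> / 2"
    using q(2) D(1) by (simp add: field_simps)
  finally show ?thesis
    using u(2)[OF z(1)] by (intro that[OF u(1)]) (auto simp: algebra_simps)
qed

lemma point_eval_restr_le:
  assumes "compact K" "t > 0"
    and \<mu>: "finite_measure \<mu>" "sets \<mu> = sets borel" "AE w in \<mu>. w \<in> K"
    and E: "E \<in> sets borel"
    and vanishing: "\<And>f. f \<in> Lt \<mu> t \<Longrightarrow> \<forall>w\<in>E. f w = 0 \<Longrightarrow> f \<in> Rt K \<mu> t"
    and z: "z \<in> K" "measure \<mu> {z} = 0"
    and M: "M \<ge> 0" "\<forall>u\<in>Rat K. cmod (u z) \<le> M * Lt_norm \<mu> t u"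
    and r: "r \<in> Rat K"
  shows "cmod (r z) \<le> 2 * M * Lt_norm (restr \<mu> E) t r"
proof -
  have meas: "\<And>N. measurable \<mu> N = measurable borel N"
    using measurable_cong_sets[OF \<mu>(2) refl] .
  define a where "a = (\<integral>w. indicator E w * cmod (r w) powr t \<partial>\<mu>)"
  have "a \<ge> 0"
    unfolding a_def by simp
  have bound: "cmod (r z) \<le> 2 * M * (a + \<theta>) powr (1 / t)" if \<theta>: "\<theta> > 0" for \<theta>
  proof -
    obtain u where u: "u \<in> Rat K" "u z = r z"
      "(\<integral>w. cmod (u w) powr t \<partial>\<mu>) \<le> 2 powr t * (a + \<theta>)"
      using Rat_localize[OF assms(1-7) z r \<theta>] unfolding a_def by blast
    have "cmod (r z) \<le> M * Lt_norm \<mu> t u"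
      using M(2) u(1,2) by auto
    also have "\<dots> \<le> M * (2 powr t * (a + \<theta>)) powr (1 / t)"
      using u(3) Rat_measurable[OF u(1)] assms(2) M(1)
      by (auto simp: Lt_norm_eq_integral meas intro!: mult_left_mono powr_mono2)
    also have "\<dots> = 2 * M * (a + \<theta>) powr (1 / t)"
      using assms(2) \<open>a \<ge> 0\<close> \<theta> by (simp add: powr_mult powr_powr)
    finally show ?thesis .
  qed
  have "((\<lambda>\<theta>. 2 * M * (a + \<theta>) powr (1 / t)) \<longlongrightarrow> 2 * M * (a + 0) powr (1 / t)) (at_right 0)"
    using assms(2) \<open>a \<ge> 0\<close>
    by (intro tendsto_intros) (auto simp: eventually_at_right_less eventually_at_filter)
  then have "cmod (r z) \<le> 2 * M * a powr (1 / t)"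
    using bound by (intro tendsto_lowerbound) (auto simp: eventually_at_filter)
  also have "a powr (1 / t) = Lt_norm (restr \<mu> E) t r"
    using E Rat_measurable[OF r] unfolding a_def by (simp add: Lt_norm_restr meas \<mu>(2))
  finally show ?thesis .
qed

lemma le_on_open_if_le_off_countable:
  fixes f :: "'a::euclidean_space \<Rightarrow> real"
  assumes "open S" "continuous_on S f" "countable C" "\<And>y. y \<in> S - C \<Longrightarrow> f y \<le> c" "x \<in> S"
  shows "f x \<le> c"
proof (rule tendsto_upperbound)
  show "(f \<longlongrightarrow> f x) (at x within S - C)"
    using assms(2,5) unfolding continuous_on_def by (blast intro: tendsto_within_subset)
  show "eventually (\<lambda>y. f y \<le> c) (at x within S - C)"
    unfolding eventually_at_filter by (auto intro!: always_eventually assms(4))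
  obtain e where "e > 0" "ball x e \<subseteq> S"
    using assms(1,5) open_contains_ball by blast
  have "x islimpt S - C"
    unfolding islimpt_approachable
  proof (intro allI impI)
    fix \<epsilon> :: real assume "\<epsilon> > 0"
    have "ball x (min \<epsilon> e) - insert x C \<noteq> {}"
      using ball_minus_countable_nonempty[of "insert x C" "min \<epsilon> e" x] assms(3) \<open>\<epsilon> > 0\<close> \<open>e > 0\<close>
      by simp
    then obtain y where "y \<in> ball x (min \<epsilon> e) - insert x C"
      by blast
    then show "\<exists>y\<in>S - C. y \<noteq> x \<and> dist y x < \<epsilon>"
      using \<open>ball x e \<subseteq> S\<close> by (intro bexI[of _ y]) (auto simp: dist_commute)
  qed
  then show "at x within S - C \<noteq> bot"
    using trivial_limit_within by blast
qed

lemma abpe_mono: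
  assumes "\<And>r. r \<in> Rat K \<Longrightarrow> Lt_norm \<nu> t r \<le> Lt_norm \<mu> t r"
  shows "abpe K \<nu> t \<subseteq> abpe K \<mu> t"
proof -
  have le: "cmod (r z) \<le> max M 0 * Lt_norm \<mu> t r"
    if "cmod (r z) \<le> M * Lt_norm \<nu> t r" "r \<in> Rat K" for M r z
  proof -
    have "M * Lt_norm \<nu> t r \<le> max M 0 * Lt_norm \<nu> t r"
      by (intro mult_right_mono) (auto simp: Lt_norm_nonneg)
    also have "\<dots> \<le> max M 0 * Lt_norm \<mu> t r"
      using assms[OF that(2)] by (intro mult_left_mono) auto
    finally show ?thesis
      using that(1) by linarith
  qed
  then have "{z. bpe K \<nu> t z} \<subseteq> {z. bpe K \<mu> t z}"
    unfolding bpe_def by blast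
  show ?thesis
  proof
    fix z0 assume "z0 \<in> abpe K \<nu> t"
    then obtain \<delta> M where z0: "z0 \<in> interior {z. bpe K \<nu> t z}" "\<delta> > 0" "M > 0"
      and bound: "\<forall>z\<in>ball z0 \<delta>. \<forall>r\<in>Rat K. cmod (r z) \<le> M * Lt_norm \<nu> t r"
      unfolding abpe_def by blast
    have "z0 \<in> interior {z. bpe K \<mu> t z}"
      using z0(1) interior_mono[OF \<open>{z. bpe K \<nu> t z} \<subseteq> _\<close>] by blast
    moreover have "\<forall>z\<in>ball z0 \<delta>. \<forall>r\<in>Rat K. cmod (r z) \<le> M * Lt_norm \<mu> t r"
      using bound le z0(3) by (metis less_imp_le max_absorb1)
    ultimately show "z0 \<in> abpe K \<mu> t"
      unfolding abpe_def using z0(2,3) by blast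
  qed
qed

lemma abpe_subset_if_bounded_off_countable:
  assumes "countable C" "c > 0"
    and bound: "\<And>z M. z \<in> K - C \<Longrightarrow> M > 0 \<Longrightarrow> \<forall>r\<in>Rat K. cmod (r z) \<le> M * Lt_norm \<mu> t r \<Longrightarrow>
      \<forall>r\<in>Rat K. cmod (r z) \<le> c * M * Lt_norm \<nu> t r"
  shows "abpe K \<mu> t \<subseteq> abpe K \<nu> t"
proof
  fix z0 assume "z0 \<in> abpe K \<mu> t"
  then obtain \<delta> M where z0: "z0 \<in> interior {z. bpe K \<mu> t z}" "\<delta> > 0" "M > 0"
    and M: "\<forall>z\<in>ball z0 \<delta>. \<forall>r\<in>Rat K. cmod (r z) \<le> M * Lt_norm \<mu> t r"
    unfolding abpe_def by blast
  obtain \<delta>' where \<delta>': "\<delta>' > 0" "\<delta>' \<le> \<delta>" "ball z0 \<delta>' \<subseteq> {z. bpe K \<mu> t z}"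
    using z0(1,2) unfolding mem_interior by (metis linorder_le_cases subset_ball subset_trans)
  then have "ball z0 \<delta>' \<subseteq> K"
    unfolding bpe_def by blast
  have bound_ball: "\<forall>z\<in>ball z0 \<delta>'. \<forall>r\<in>Rat K. cmod (r z) \<le> c * M * Lt_norm \<nu> t r"
  proof (intro ballI)
    fix z r assume "z \<in> ball z0 \<delta>'" "r \<in> Rat K"
    show "cmod (r z) \<le> c * M * Lt_norm \<nu> t r"
    proof (rule le_on_open_if_le_off_countable[OF open_ball _ assms(1) _ \<open>z \<in> ball z0 \<delta>'\<close>])
      show "continuous_on (ball z0 \<delta>') (\<lambda>z. cmod (r z))"
        using continuous_on_Rat[OF \<open>r \<in> Rat K\<close>] \<open>ball z0 \<delta>' \<subseteq> K\<close>
        by (intro continuous_on_norm) (rule continuous_on_subset)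
      show "cmod (r y) \<le> c * M * Lt_norm \<nu> t r" if "y \<in> ball z0 \<delta>' - C" for y
        using bound[of y M] M \<delta>'(2) that \<open>ball z0 \<delta>' \<subseteq> K\<close> z0(3) \<open>r \<in> Rat K\<close> by auto
    qed
  qed
  then have "ball z0 \<delta>' \<subseteq> {z. bpe K \<nu> t z}"
    using \<open>ball z0 \<delta>' \<subseteq> K\<close> unfolding bpe_def by blast
  then have "z0 \<in> interior {z. bpe K \<nu> t z}"
    using \<delta>'(1) by (meson mem_interior)
  then show "z0 \<in> abpe K \<nu> t"
    unfolding abpe_def using \<delta>'(1) bound_ball mult_pos_pos[OF assms(2) z0(3)] by blast
qed

theorem lemma7p3:
  fixes K :: "complex set" and t :: real and \<mu> :: "complex measure"
    and \<Delta>00 \<Delta>01 :: "complex set"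
  assumes "compact K" and "1 \<le> t"
    and "sets \<mu> = sets borel" and "finite_measure \<mu>" and "spt \<mu> \<subseteq> K"
    and "\<Delta>00 \<in> sets borel" and "\<Delta>01 \<in> sets borel"
    and "\<Delta>00 \<inter> \<Delta>01 = {}" and "\<Delta>00 \<union> \<Delta>01 = spt \<mu>"
    and "Rt K \<mu> t = {f. f \<in> Lt (restr \<mu> \<Delta>00) t \<and> f \<in> Rt K (restr \<mu> \<Delta>01) t}"
    and "pure K (restr \<mu> \<Delta>01) t"
  shows "abpe K (restr \<mu> \<Delta>01) t = abpe K \<mu> t"
proof
  have t: "t > 0"
    using assms(2) by simp
  have AE_K: "AE w in \<mu>. w \<in> K"
    using AE_in_spt[OF assms(3)] by eventually_elim (use assms(5) in auto)
  have sets: "\<Delta>00 \<in> sets \<mu>" "\<Delta>01 \<in> sets \<mu>"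
    using assms(3,6,7) by auto
  have vanishing: "f \<in> Rt K \<mu> t" if "f \<in> Lt \<mu> t" "\<forall>w\<in>\<Delta>01. f w = 0" for f
  proof -
    have "Lt_norm (restr \<mu> \<Delta>01) t f = 0"
      using Lt_norm_restr_vanishing[OF sets(2)] that unfolding Lt_def by auto
    then have "f \<in> Rt K (restr \<mu> \<Delta>01) t"
      using Rt_if_Lt_norm_eq_0 Lt_restr[OF sets(2) that(1)] by blast
    then show ?thesis
      using assms(10) Lt_restr[OF sets(1) that(1)] by blast
  qed
  show "abpe K (restr \<mu> \<Delta>01) t \<subseteq> abpe K \<mu> t"
    using Lt_norm_restr_le[OF sets(2) Rat_in_Lt[OF assms(1) _ assms(4,3) AE_K] t] t
    by (intro abpe_mono) auto
  show "abpe K \<mu> t \<subseteq> abpe K (restr \<mu> \<Delta>01) t"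
    using point_eval_restr_le[OF assms(1) t assms(4,3) AE_K assms(7) vanishing]
    by (intro abpe_subset_if_bounded_off_countable[OF finite_measure.countable_support[OF assms(4)], of 2])
      (auto simp: less_imp_le)
qed

end
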